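(* Let $A=(a_{ij})$ be a nonnegative $n\times n$ matrix. Then $A$ is primitive if and only if $A$ is irreducible and there exists $j\in[n]$ such that $A$ is $j$-primitive.
   Context: $A$ is primitive if $A^k>0$ (entrywise) for some positive integer $k$. $A$ is reducible if there is a nonempty proper subset $I\subset[n]$ with $a_{ij}=0$ for all $i\in I$, $j\notin I$; otherwise irreducible. For $j\in[n]$, $A$ is $j$-primitive if there exists a positive integer $k$ with $(A^k)_{uj}>0$ for all $u\in[n]$. *)

theory Defs
  imports "HOL-Analysis.Analysis"
begin

definition nonneg_mat :: "real^'n^'n \<Rightarrow> bool" where
  "nonneg_mat A \<longleftrightarrow> (\<forall>i j. A $ i $ j \<ge> 0)"

definition mat_pow :: "real^'n^'n \<Rightarrow> nat \<Rightarrow> real^'n^'n" where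
  "mat_pow A k = ((\<lambda>B. B ** A) ^^ k) (mat 1)"

definition primitive :: "real^'n^'n \<Rightarrow> bool" where
  "primitive A \<longleftrightarrow> (\<exists>k>0. \<forall>i j. mat_pow A k $ i $ j > 0)"

definition reducible :: "real^'n^'n \<Rightarrow> bool" where
  "reducible A \<longleftrightarrow> (\<exists>I. I \<noteq> {} \<and> I \<noteq> UNIV \<and> (\<forall>i\<in>I. \<forall>j. j \<notin> I \<longrightarrow> A $ i $ j = 0))"

definition irreducible_mat :: "real^'n^'n \<Rightarrow> bool" where
  "irreducible_mat A \<longleftrightarrow> \<not> reducible A"

definition j_primitive :: "real^'n^'n \<Rightarrow> 'n \<Rightarrow> bool" where
  "j_primitive A j \<longleftrightarrow> (\<exists>k>0. \<forall>u. mat_pow A k $ u $ j > 0)"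

end

theory Submission
  imports Defs
begin

text \<open>
  A primitive matrix has no invariant block, since such a block survives in every power, and all
  its columns are positive. Conversely, let column j of A^k be positive. Then A has no zero row,
  so the set of positive columns of A^t never shrinks as t grows; and by irreducibility some
  positive entry of A leads from a column that is already positive to one that is not yet,
  so the set grows strictly until it is everything. Hence A^(k + n) > 0.
\<close>

lemma mat_pow_0 [simp]: "mat_pow A 0 = mat 1"
  by (simp add: mat_pow_def)

lemma mat_pow_Suc: "mat_pow A (Suc t) = mat_pow A t ** A"
  by (simp add: mat_pow_def)

lemma mat_pow_add: "mat_pow A (s + t) = mat_pow A s ** mat_pow A t"
  by (induction t) (simp_all add: mat_pow_Suc matrix_mul_assoc)

lemma mat_pow_Suc_left: "mat_pow A (Suc t) = A ** mat_pow A t"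
  using mat_pow_add[of A 1 t] by (simp add: mat_pow_Suc)

lemma nonneg_mat_mult: "nonneg_mat X \<Longrightarrow> nonneg_mat Y \<Longrightarrow> nonneg_mat (X ** Y)"
  unfolding nonneg_mat_def matrix_matrix_mult_def by (auto intro!: sum_nonneg)

lemma nonneg_mat_pow: "nonneg_mat A \<Longrightarrow> nonneg_mat (mat_pow A t)"
proof (induction t)
  case 0
  then show ?case by (simp add: nonneg_mat_def mat_def)
next
  case (Suc t)
  then show ?case by (simp add: mat_pow_Suc nonneg_mat_mult)
qed

lemma nonneg_mat_pos_iff: "nonneg_mat A \<Longrightarrow> A $ i $ j > 0 \<longleftrightarrow> A $ i $ j \<noteq> 0"
  unfolding nonneg_mat_def by (metis less_eq_real_def order_less_irrefl)

lemma matrix_mult_pos: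
  assumes "nonneg_mat X" "nonneg_mat Y" "X $ i $ k > 0" "Y $ k $ j > 0"
  shows "(X ** Y) $ i $ j > 0"
proof -
  have "0 < (\<Sum>m\<in>UNIV. X $ i $ m * Y $ m $ j)"
    using assms by (intro sum_pos2[of UNIV k]) (auto simp: nonneg_mat_def)
  then show ?thesis
    by (simp add: matrix_matrix_mult_def)
qed

lemma matrix_mult_nonzero_imp_row_nonzero:
  assumes "(X ** Y) $ i $ j \<noteq> 0"
  obtains m where "X $ i $ m \<noteq> 0"
  using assms by (force simp: matrix_matrix_mult_def)

lemma mat_pow_invariant_block_zero:
  assumes block: "\<forall>i\<in>I. \<forall>j. j \<notin> I \<longrightarrow> A $ i $ j = 0" and "i \<in> I" "j \<notin> I"
  shows "mat_pow A t $ i $ j = 0"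
  using \<open>j \<notin> I\<close>
proof (induction t arbitrary: j)
  case 0
  with \<open>i \<in> I\<close> show ?case by (auto simp: mat_def)
next
  case (Suc t)
  have "mat_pow A t $ i $ m * A $ m $ j = 0" for m
    using Suc block by (cases "m \<in> I") auto
  then show ?case
    by (simp add: mat_pow_Suc matrix_matrix_mult_def sum.neutral)
qed

lemma irreducible_mat_exit_entry:
  assumes "irreducible_mat A" "I \<noteq> {}" "I \<noteq> UNIV"
  obtains i j where "i \<in> I" "j \<notin> I" "A $ i $ j \<noteq> 0"
  using assms unfolding irreducible_mat_def reducible_def by blast

lemma increasing_chain_reaches_UNIV:
  fixes P :: "nat \<Rightarrow> 'a::finite set"
  assumes "P 0 \<noteq> {}"
    and mono: "\<And>t. P t \<subseteq> P (Suc t)"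
    and grows: "\<And>t. P t \<noteq> {} \<Longrightarrow> P t \<noteq> UNIV \<Longrightarrow> P t \<subset> P (Suc t)"
  shows "P CARD('a) = UNIV"
proof -
  have "P t = UNIV \<or> t < card (P t)" for t
  proof (induction t)
    case 0
    from \<open>P 0 \<noteq> {}\<close> show ?case by (simp add: card_gt_0_iff)
  next
    case (Suc t)
    have "P 0 \<subseteq> P t"
      using mono by (induction t) auto
    with \<open>P 0 \<noteq> {}\<close> have "P t \<noteq> {}" by blast
    show ?case
    proof (cases "P t = UNIV")
      case True
      with mono[of t] show ?thesis by auto
    next
      case False
      with grows[OF \<open>P t \<noteq> {}\<close>] have "card (P t) < card (P (Suc t))"
        by (simp add: psubset_card_mono)
      with False Suc.IH show ?thesis by simp
    qed
  qed
  moreover have "card (P CARD('a)) \<le> CARD('a)"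
    by (simp add: card_mono)
  ultimately show ?thesis
    using not_le by blast
qed

lemma primitive_imp_irreducible_mat:
  assumes "primitive A"
  shows "irreducible_mat A"
  unfolding irreducible_mat_def reducible_def
proof
  assume "\<exists>I. I \<noteq> {} \<and> I \<noteq> UNIV \<and> (\<forall>i\<in>I. \<forall>j. j \<notin> I \<longrightarrow> A $ i $ j = 0)"
  then obtain I i j where "i \<in> I" "j \<notin> I" "\<forall>i\<in>I. \<forall>j. j \<notin> I \<longrightarrow> A $ i $ j = 0"
    by blast
  then have "mat_pow A k $ i $ j = 0" for k
    by (intro mat_pow_invariant_block_zero[of I])
  with assms show False
    unfolding primitive_def by (metis less_irrefl)
qed

lemma primitive_imp_j_primitive: "primitive A \<Longrightarrow> j_primitive A j"
  unfolding primitive_def j_primitive_def by blast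

lemma j_primitive_imp_row_pos:
  assumes "nonneg_mat A" "j_primitive A j"
  obtains w where "A $ u $ w > 0"
proof -
  obtain k where "k > 0" "mat_pow A k $ u $ j > 0"
    using assms(2) unfolding j_primitive_def by blast
  then obtain t where "(A ** mat_pow A t) $ u $ j \<noteq> 0"
    by (metis gr0_implies_Suc less_irrefl mat_pow_Suc_left)
  then obtain w where "A $ u $ w \<noteq> 0"
    by (rule matrix_mult_nonzero_imp_row_nonzero)
  with assms(1) show thesis
    by (simp add: nonneg_mat_pos_iff that)
qed

lemma irreducible_j_primitive_imp_primitive:
  fixes A :: "real^'n^'n"
  assumes nonneg: "nonneg_mat A" and irr: "irreducible_mat A" and "j_primitive A j"
  shows "primitive A"
proof -
  obtain k where "k > 0" and col_j: "\<forall>u. mat_pow A k $ u $ j > 0"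
    using \<open>j_primitive A j\<close> unfolding j_primitive_def by blast
  define P where "P t = {v. \<forall>u. mat_pow A (k + t) $ u $ v > 0}" for t
  have step: "w \<in> P (Suc t)" if "v \<in> P t" "A $ v $ w > 0" for v w t
    using that matrix_mult_pos[OF nonneg_mat_pow[OF nonneg] nonneg]
    unfolding P_def by (simp add: mat_pow_Suc) blast
  have mono: "P t \<subseteq> P (Suc t)" for t
  proof
    fix v assume "v \<in> P t"
    have "mat_pow A (Suc (k + t)) $ u $ v > 0" for u
    proof -
      obtain w where "A $ u $ w > 0"
        using nonneg \<open>j_primitive A j\<close> by (rule j_primitive_imp_row_pos)
      with \<open>v \<in> P t\<close> show ?thesis
        unfolding mat_pow_Suc_left P_def
        using matrix_mult_pos[OF nonneg nonneg_mat_pow[OF nonneg]] by blast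
    qed
    then show "v \<in> P (Suc t)"
      unfolding P_def by simp
  qed
  have grows: "P t \<subset> P (Suc t)" if proper: "P t \<noteq> {}" "P t \<noteq> UNIV" for t
  proof -
    obtain v w where "v \<in> P t" "w \<notin> P t" "A $ v $ w \<noteq> 0"
      using irr proper by (rule irreducible_mat_exit_entry)
    with step nonneg_mat_pos_iff[OF nonneg] have "w \<in> P (Suc t)" "w \<notin> P t"
      by blast+
    with mono[of t] show ?thesis by blast
  qed
  have "j \<in> P 0"
    using col_j unfolding P_def by simp
  then have "P CARD('n) = UNIV"
    using mono grows by (intro increasing_chain_reaches_UNIV) auto
  with \<open>k > 0\<close> show ?thesis
    unfolding primitive_def P_def by (intro exI[of _ "k + CARD('n)"]) auto
qed

theorem proposition4p4:
  fixes A :: "real^'n^'n"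
  assumes "nonneg_mat A"
  shows "primitive A \<longleftrightarrow> (irreducible_mat A \<and> (\<exists>j. j_primitive A j))"
  using assms primitive_imp_irreducible_mat primitive_imp_j_primitive
    irreducible_j_primitive_imp_primitive by blast

end
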